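(* Let $\mathcal{E}$ be a finite labeled prime event structure. Then $\mathcal{L}(\mathcal{E})=\mathcal{L}(\mathcal{A}^{\mathcal{E}})$.
   Context: A finite $\mathcal{X}$-labeled prime event structure is $\mathcal{E}=\langle E,<,\#,h\rangle$ with finite $E$, strict partial order $<$, labeling $h:E\to\mathcal{X}$, and symmetric irreflexive conflict relation $\#$ closed under $<$ (if $e\#e'$ and $e'<e''$ then $e\#e''$); $\mathcal{X}$ contains $\varepsilon$ denoting the empty word; there is an event $\bot$ below all other events with $h(\bot)=\varepsilon$. A configuration is a left-closed, conflict-free subset of $E$; maximal if no configuration strictly contains it. A trace of a configuration lists each of its events exactly once respecting $<$; $\mathcal{L}(\mathcal{E})$ is the set of words $h(t)$ (pointwise, $\varepsilon$ omitted) for traces $t$ of maximal configurations. The automaton encoding is the NFA $\mathcal{A}^{\mathcal{E}}=\langle Q^{\mathcal{E}},\mathcal{X},\delta^{\mathcal{E}},q_0,F\rangle$ with $Q^{\mathcal{E}}=\{q_C\mid C$ a configuration of $\mathcal{E}\}$, $(q_{C_1},\sigma,q_{C_2})\in\delta^{\mathcal{E}}$ iff there is $e\in E$ with $C_1\cup\{e\}=C_2$ and $h(e)=\sigma$ (transitions labeled $\varepsilon$ are $\varepsilon$-moves), $q_0=q_{\{\bot\}}$, and $F=\{q_C\mid C$ maximal$\}$; $\mathcal{L}(\mathcal{A}^{\mathcal{E}})$ is its accepted language. *)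

theory Defs
  imports Main
begin

text \<open>An event structure is given by a set of events E, a causality relation lt
(the strict partial order <), a conflict relation cf (#), a labelling h into the
alphabet 'x, a distinguished label eps (the empty word) and a bottom event botE.\<close>

definition pes ::
  "'e set \<Rightarrow> ('e \<Rightarrow> 'e \<Rightarrow> bool) \<Rightarrow> ('e \<Rightarrow> 'e \<Rightarrow> bool) \<Rightarrow> ('e \<Rightarrow> 'x) \<Rightarrow> 'x \<Rightarrow> 'e \<Rightarrow> bool"
where
  "pes E lt cf h eps botE \<longleftrightarrow>
     finite E
   \<and> (\<forall>e e'. lt e e' \<longrightarrow> e \<in> E \<and> e' \<in> E)
   \<and> (\<forall>e. \<not> lt e e)
   \<and> (\<forall>e1 e2 e3. lt e1 e2 \<longrightarrow> lt e2 e3 \<longrightarrow> lt e1 e3)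
   \<and> (\<forall>e e'. cf e e' \<longrightarrow> e \<in> E \<and> e' \<in> E)
   \<and> (\<forall>e e'. cf e e' \<longrightarrow> cf e' e)
   \<and> (\<forall>e. \<not> cf e e)
   \<and> (\<forall>e e' e''. cf e e' \<longrightarrow> lt e' e'' \<longrightarrow> cf e e'')
   \<and> botE \<in> E
   \<and> (\<forall>e\<in>E. e \<noteq> botE \<longrightarrow> lt botE e)
   \<and> h botE = eps"

definition config :: "'e set \<Rightarrow> ('e \<Rightarrow> 'e \<Rightarrow> bool) \<Rightarrow> ('e \<Rightarrow> 'e \<Rightarrow> bool) \<Rightarrow> 'e set \<Rightarrow> bool" where
  "config E lt cf C \<longleftrightarrow> C \<subseteq> E
     \<and> (\<forall>e\<in>C. \<forall>e'. lt e' e \<longrightarrow> e' \<in> C)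
     \<and> (\<forall>e\<in>C. \<forall>e'\<in>C. \<not> cf e e')"

definition max_config :: "'e set \<Rightarrow> ('e \<Rightarrow> 'e \<Rightarrow> bool) \<Rightarrow> ('e \<Rightarrow> 'e \<Rightarrow> bool) \<Rightarrow> 'e set \<Rightarrow> bool" where
  "max_config E lt cf C \<longleftrightarrow> config E lt cf C \<and> \<not> (\<exists>C'. config E lt cf C' \<and> C \<subset> C')"

definition is_trace :: "('e \<Rightarrow> 'e \<Rightarrow> bool) \<Rightarrow> 'e set \<Rightarrow> 'e list \<Rightarrow> bool" where
  "is_trace lt C t \<longleftrightarrow> distinct t \<and> set t = C
     \<and> (\<forall>i<length t. \<forall>j<length t. lt (t ! i) (t ! j) \<longrightarrow> i < j)"

definition word_of :: "('e \<Rightarrow> 'x) \<Rightarrow> 'x \<Rightarrow> 'e list \<Rightarrow> 'x list" where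
  "word_of h eps t = filter (\<lambda>a. a \<noteq> eps) (map h t)"

definition pes_lang ::
  "'e set \<Rightarrow> ('e \<Rightarrow> 'e \<Rightarrow> bool) \<Rightarrow> ('e \<Rightarrow> 'e \<Rightarrow> bool) \<Rightarrow> ('e \<Rightarrow> 'x) \<Rightarrow> 'x \<Rightarrow> 'x list set" where
  "pes_lang E lt cf h eps =
     {word_of h eps t | t C. max_config E lt cf C \<and> is_trace lt C t}"

inductive nfa_run :: "('q \<times> 'x \<times> 'q) set \<Rightarrow> 'x \<Rightarrow> 'q \<Rightarrow> 'x list \<Rightarrow> 'q \<Rightarrow> bool"
  for delta :: "('q \<times> 'x \<times> 'q) set" and eps :: 'x where
  run_nil: "nfa_run delta eps q [] q"
| run_step: "(q, a, q') \<in> delta \<Longrightarrow> nfa_run delta eps q' w q''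
     \<Longrightarrow> nfa_run delta eps q (if a = eps then w else a # w) q''"

text \<open>Language of the NFA (Q, delta, q0, F); all states involved lie in Q by construction
of delta below.\<close>
definition nfa_lang :: "'q set \<Rightarrow> ('q \<times> 'x \<times> 'q) set \<Rightarrow> 'q \<Rightarrow> 'q set \<Rightarrow> 'x \<Rightarrow> 'x list set" where
  "nfa_lang Q delta q0 F eps = {w. \<exists>q\<in>F. nfa_run delta eps q0 w q}"

definition enc_states :: "'e set \<Rightarrow> ('e \<Rightarrow> 'e \<Rightarrow> bool) \<Rightarrow> ('e \<Rightarrow> 'e \<Rightarrow> bool) \<Rightarrow> 'e set set" where
  "enc_states E lt cf = {C. config E lt cf C}"

definition enc_delta ::
  "'e set \<Rightarrow> ('e \<Rightarrow> 'e \<Rightarrow> bool) \<Rightarrow> ('e \<Rightarrow> 'e \<Rightarrow> bool) \<Rightarrow> ('e \<Rightarrow> 'x) \<Rightarrow> ('e set \<times> 'x \<times> 'e set) set" where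
  "enc_delta E lt cf h = {(C1, a, C2). config E lt cf C1 \<and> config E lt cf C2
      \<and> (\<exists>e\<in>E. e \<notin> C1 \<and> C1 \<union> {e} = C2 \<and> h e = a)}"

definition enc_final :: "'e set \<Rightarrow> ('e \<Rightarrow> 'e \<Rightarrow> bool) \<Rightarrow> ('e \<Rightarrow> 'e \<Rightarrow> bool) \<Rightarrow> 'e set set" where
  "enc_final E lt cf = {C. max_config E lt cf C}"

definition enc_lang ::
  "'e set \<Rightarrow> ('e \<Rightarrow> 'e \<Rightarrow> bool) \<Rightarrow> ('e \<Rightarrow> 'e \<Rightarrow> bool) \<Rightarrow> ('e \<Rightarrow> 'x) \<Rightarrow> 'x \<Rightarrow> 'e \<Rightarrow> 'x list set" where
  "enc_lang E lt cf h eps botE =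
     nfa_lang (enc_states E lt cf) (enc_delta E lt cf h) {botE} (enc_final E lt cf) eps"

end

theory Submission
  imports Defs
begin

text \<open>Each transition of the encoding adds one event and reads its label, so a run
from the configuration of a list s of events along a list t ends in the configuration
of s @ t. Conversely, every prefix of a trace of a configuration is again a
configuration, so reading a trace event by event is a run. The only mismatch is the
start state {\<bottom>}: \<bottom> lies in every maximal configuration, comes first in each of its
traces because it is below every other event, and its label \<epsilon> is not read.\<close>

lemma word_of_Cons:
  "word_of h eps (x # t) = (if h x = eps then word_of h eps t else h x # word_of h eps t)"
  by (simp add: word_of_def)

lemma config_trace_prefix:
  assumes C: "config E lt cf C" and tr: "is_trace lt C (s @ t)"
  shows "config E lt cf (set s)"
proof -
  have sC: "set s \<subseteq> C" using tr unfolding is_trace_def by auto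
  have "e' \<in> set s" if j: "j < length s" and lt: "lt e' (s ! j)" for j e'
  proof -
    have "e' \<in> set (s @ t)" using C sC j lt tr unfolding config_def is_trace_def by auto
    then obtain i where i: "i < length (s @ t)" "(s @ t) ! i = e'" by (metis in_set_conv_nth)
    have "i < j" using tr i j lt unfolding is_trace_def by (fastforce simp: nth_append)
    with i j show ?thesis by (auto simp: nth_append)
  qed
  then have "e' \<in> set s" if "e \<in> set s" "lt e' e" for e e'
    using that by (metis in_set_conv_nth)
  with C sC show ?thesis unfolding config_def by blast
qed

lemma is_trace_snoc:
  assumes tr: "is_trace lt D s" and D: "config E lt cf D"
    and e: "e \<notin> D" and irrefl: "\<not> lt e e"
  shows "is_trace lt (insert e D) (s @ [e])"
proof -
  have below_new: "i < length s" if "i < Suc (length s)" "lt ((s @ [e]) ! i) e" for i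
    using that irrefl by (cases "i = length s") auto
  have not_from_new: "\<not> lt e (s ! j)" if "j < length s" for j
    using that tr D e unfolding is_trace_def config_def by (meson nth_mem)
  show ?thesis
    using tr unfolding is_trace_def
    by (auto simp: nth_append less_Suc_eq not_from_new e irrefl dest: below_new split: if_splits)
qed

lemma nfa_run_from_trace_prefix:
  assumes C: "config E lt cf C"
  shows "is_trace lt C (s @ t) \<Longrightarrow>
    nfa_run (enc_delta E lt cf h) eps (set s) (word_of h eps t) C"
proof (induction t arbitrary: s)
  case Nil
  then have "set s = C" unfolding is_trace_def by simp
  then show ?case by (simp add: word_of_def nfa_run.run_nil)
next
  case (Cons x t)
  then have tr: "is_trace lt C ((s @ [x]) @ t)" by simp
  have s: "config E lt cf (set s)" using config_trace_prefix[OF C Cons.prems] .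
  have sx: "config E lt cf (set (s @ [x]))" using config_trace_prefix[OF C tr] .
  have "x \<notin> set s" using Cons.prems unfolding is_trace_def by simp
  with s sx have "(set s, h x, set (s @ [x])) \<in> enc_delta E lt cf h"
    unfolding enc_delta_def config_def by auto
  from nfa_run.run_step[OF this Cons.IH[OF tr]] show ?case by (simp add: word_of_Cons)
qed

lemma trace_extension_of_nfa_run:
  assumes run: "nfa_run (enc_delta E lt cf h) eps D w C"
    and irrefl: "\<And>e. \<not> lt e e"
  shows "is_trace lt D s \<Longrightarrow> \<exists>t. is_trace lt C (s @ t) \<and> word_of h eps t = w"
  using run
proof (induction arbitrary: s rule: nfa_run.induct)
  case (run_nil D)
  then show ?case by (intro exI[of _ "[]"]) (simp add: word_of_def)
next
  case (run_step D a D' w C)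
  then obtain e where D: "config E lt cf D" and e: "e \<notin> D" "D' = insert e D" "h e = a"
    unfolding enc_delta_def by auto
  have "is_trace lt D' (s @ [e])"
    using is_trace_snoc[OF run_step.prems D e(1) irrefl] e(2) by simp
  then obtain t where "is_trace lt C (s @ e # t)" "word_of h eps t = w"
    using run_step.IH by fastforce
  with e(3) show ?case by (intro exI[of _ "e # t"]) (simp add: word_of_Cons)
qed

lemma trace_starts_with_least:
  assumes tr: "is_trace lt C t" and x: "x \<in> C"
    and least: "\<And>e. e \<in> C \<Longrightarrow> e \<noteq> x \<Longrightarrow> lt x e"
  shows "t = x # tl t"
proof -
  obtain i where i: "i < length t" "t ! i = x"
    using tr x unfolding is_trace_def by (auto simp: in_set_conv_nth)
  have "t ! 0 = x"
  proof (rule ccontr)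
    assume "t ! 0 \<noteq> x"
    moreover have "t ! 0 \<in> C"
      using tr i(1) unfolding is_trace_def by (metis gr0I not_less0 nth_mem)
    ultimately have "lt (t ! i) (t ! 0)" using least i(2) by simp
    with tr i(1) show False unfolding is_trace_def by (metis gr0I not_less0)
  qed
  with i(1) show ?thesis by (cases t) auto
qed

definition bot_trace_words ::
  "'e set \<Rightarrow> ('e \<Rightarrow> 'e \<Rightarrow> bool) \<Rightarrow> ('e \<Rightarrow> 'e \<Rightarrow> bool) \<Rightarrow> ('e \<Rightarrow> 'x) \<Rightarrow> 'x \<Rightarrow> 'e \<Rightarrow>
    'x list set"
where
  "bot_trace_words E lt cf h eps botE =
     {word_of h eps t | t C. max_config E lt cf C \<and> is_trace lt C (botE # t)}"

context
  fixes E :: "'e set" and lt cf :: "'e \<Rightarrow> 'e \<Rightarrow> bool"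
    and h :: "'e \<Rightarrow> 'x" and eps :: 'x and botE :: 'e
  assumes pes: "pes E lt cf h eps botE"
begin

lemma lt_irrefl: "\<not> lt e e"
  using pes unfolding pes_def by blast

lemma bot_below: "e \<in> E \<Longrightarrow> e \<noteq> botE \<Longrightarrow> lt botE e"
  using pes unfolding pes_def by blast

lemma h_bot: "h botE = eps"
  using pes unfolding pes_def by blast

lemma config_bot: "config E lt cf {botE}"
proof -
  have "\<not> lt e botE" for e
    using pes unfolding pes_def by metis
  with pes show ?thesis unfolding config_def pes_def by auto
qed

lemma bot_in_max_config:
  assumes max: "max_config E lt cf C"
  shows "botE \<in> C"
proof (rule ccontr)
  assume no_bot: "botE \<notin> C"
  from max have C: "config E lt cf C" unfolding max_config_def by blast
  have "e \<notin> C" for e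
  proof
    assume e: "e \<in> C"
    with C no_bot have "lt botE e" unfolding config_def by (blast intro: bot_below)
    with C e no_bot show False unfolding config_def by blast
  qed
  with max config_bot show False unfolding max_config_def by blast
qed

lemma trace_of_max_config_starts_with_bot:
  assumes "max_config E lt cf C" and "is_trace lt C t"
  shows "t = botE # tl t"
  using assms bot_in_max_config bot_below
  by (intro trace_starts_with_least[of lt C]) (auto simp: max_config_def config_def)

lemma pes_lang_eq_bot_trace_words:
  "pes_lang E lt cf h eps = bot_trace_words E lt cf h eps botE"
proof (intro equalityI subsetI)
  fix w assume "w \<in> pes_lang E lt cf h eps"
  then obtain t C where w: "w = word_of h eps t" and C: "max_config E lt cf C"
    and tr: "is_trace lt C t" unfolding pes_lang_def by blast
  have t: "t = botE # tl t" using trace_of_max_config_starts_with_bot[OF C tr] .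
  with h_bot have "w = word_of h eps (tl t)" unfolding w by (metis word_of_Cons)
  moreover from tr t have "is_trace lt C (botE # tl t)" by metis
  ultimately show "w \<in> bot_trace_words E lt cf h eps botE"
    using C unfolding bot_trace_words_def by blast
next
  fix w assume "w \<in> bot_trace_words E lt cf h eps botE"
  then obtain t C where w: "w = word_of h eps t" and C: "max_config E lt cf C"
    and tr: "is_trace lt C (botE # t)" unfolding bot_trace_words_def by blast
  from w h_bot have "w = word_of h eps (botE # t)" by (simp add: word_of_Cons)
  with C tr show "w \<in> pes_lang E lt cf h eps" unfolding pes_lang_def by blast
qed

lemma enc_lang_eq_bot_trace_words:
  "enc_lang E lt cf h eps botE = bot_trace_words E lt cf h eps botE"
proof (intro equalityI subsetI)
  fix w assume "w \<in> enc_lang E lt cf h eps botE"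
  then obtain C where C: "max_config E lt cf C"
    and run: "nfa_run (enc_delta E lt cf h) eps {botE} w C"
    unfolding enc_lang_def nfa_lang_def enc_final_def by auto
  have "is_trace lt {botE} [botE]" using lt_irrefl unfolding is_trace_def by simp
  from trace_extension_of_nfa_run[OF run lt_irrefl this]
  obtain t where "is_trace lt C (botE # t)" "word_of h eps t = w" by auto
  with C show "w \<in> bot_trace_words E lt cf h eps botE"
    unfolding bot_trace_words_def by blast
next
  fix w assume "w \<in> bot_trace_words E lt cf h eps botE"
  then obtain t C where w: "w = word_of h eps t" and C: "max_config E lt cf C"
    and tr: "is_trace lt C ([botE] @ t)" unfolding bot_trace_words_def by auto
  from C have "config E lt cf C" unfolding max_config_def by blast
  from nfa_run_from_trace_prefix[where h = h and eps = eps, OF this tr] w C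
  show "w \<in> enc_lang E lt cf h eps botE"
    unfolding enc_lang_def nfa_lang_def enc_final_def by auto
qed

end

theorem lemma5:
  fixes E :: "'e set" and lt cf :: "'e \<Rightarrow> 'e \<Rightarrow> bool"
    and h :: "'e \<Rightarrow> 'x" and eps :: 'x and botE :: 'e
  assumes "pes E lt cf h eps botE"
  shows "pes_lang E lt cf h eps = enc_lang E lt cf h eps botE"
  using pes_lang_eq_bot_trace_words[OF assms] enc_lang_eq_bot_trace_words[OF assms] by simp

end
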